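(* Let $(\mathcal S,\mathcal A,H,P,R,\mu)$ be an episodic tabular MDP as in the context, with non-negative mean rewards $r$, and let $C\ge1$. Assume that for every $(h,s)\in[H]\times\mathcal S$ such that $r_h(s,a)>0$ for some $a$, we have $\min_{a}r_h(s,a)>0$ and $\max_a r_h(s,a)/\min_a r_h(s,a)\le C$. Then $CR^1(P,r)\ge\frac{1}{AC}$.
   Context: Episodic tabular MDP $(\mathcal S,\mathcal A,H,P,R,\mu)$: finite state space $\mathcal S$ with $|\mathcal S|=S$, finite action space $\mathcal A$ with $|\mathcal A|=A$, horizon $H\in\mathbb N$, transition kernels $P_h(\cdot\mid s,a)$, initial state distribution $\mu$, and random non-negative rewards $R_h(s,a)$ for $(h,s,a)\in\mathcal X:=[H]\times\mathcal S\times\mathcal A$. Initially $s_1\sim\mu$; at step $h$ the agent in state $s_h$ picks $a_h$, receives $R_h(s_h,a_h)$ and moves to $s_{h+1}\sim P_h(\cdot\mid s_h,a_h)$. All rewards are drawn before the interaction. The vectors $\mathcal R_h=\{R_h(s,a)\}_{s,a}$ for different $h$ are mutually independent (entries of one $\mathcal R_h$ may be arbitrarily correlated); rewards are independent of transitions, and transitions are independent across steps. Let $r_h(s,a)=\mathbb E[R_h(s,a)]$ and let $\mathcal D(r)$ denote the set of all such reward distributions with means $r$. For $L\in\{0,\dots,H\}$ an $L$-lookahead policy draws $a_h\sim\pi_h(\cdot\mid s_h,\mathcal R_h^L)$, where $\mathcal R_h^L=(\mathcal R_t)_{h\le t\le\min(h+L-1,H)}$ and $\mathcal R_h^0=\emptyset$;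 $\Pi^L$ is the set of these policies. The value is $V^{L,\pi}(P,r)=\mathbb E[\sum_{h=1}^H R_h(s_h,a_h)]$, and $V^{L,*}(P,r)=\sup_{\pi\in\Pi^L}V^{L,\pi}(P,r)$. The competitive ratio is $CR^L(P,r)=\inf_{\mathcal D(r)}V^{0,*}(P,r)/V^{L,*}(P,r)$, with the convention that any division by zero equals $+\infty$. In particular $CR^1$ compares no-lookahead agents to agents that observe the current step's rewards $\mathcal R_h$ before acting. *)

theory Defs
  imports "HOL-Probability.Probability"
begin

(* Reward vectors of one step: R s a.  Their measurable space is the Borel
   sigma-algebra of the (finite) product topology on functions. *)
type_synonym ('s,'a) rvec = "'s \<Rightarrow> 'a \<Rightarrow> real"

(* A (possibly randomised) one-step-lookahead policy: at step h, in state s,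
   having observed the current step's reward vector R_h, draw an action. *)
type_synonym ('s,'a) lpolicy = "nat \<Rightarrow> 's \<Rightarrow> ('s,'a) rvec \<Rightarrow> 'a pmf"

(* Value-to-go with n remaining steps (the current step is h = H - n + 1 when n \<ge> 1).
   Rewards of different steps are independent (D h is the law of R_h), independent
   of the transitions, and the policy at step h only sees s_h and R_h, so the expected
   return is given by this backward recursion. *)
fun qval :: "nat \<Rightarrow> (nat \<Rightarrow> 's \<Rightarrow> 'a \<Rightarrow> 's pmf) \<Rightarrow> (nat \<Rightarrow> ('s,'a) rvec measure)
             \<Rightarrow> ('s::finite,'a::finite) lpolicy \<Rightarrow> nat \<Rightarrow> 's \<Rightarrow> real" where
  "qval H P D \<pi> 0 s = 0"
| "qval H P D \<pi> (Suc n) s =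
     (let h = H - n in
      \<integral>R. (\<Sum>a\<in>UNIV. pmf (\<pi> h s R) a *
              (R s a + (\<Sum>s'\<in>UNIV. pmf (P h s a) s' * qval H P D \<pi> n s'))) \<partial>(D h))"

definition policy_value :: "nat \<Rightarrow> 's pmf \<Rightarrow> (nat \<Rightarrow> 's \<Rightarrow> 'a \<Rightarrow> 's pmf)
     \<Rightarrow> (nat \<Rightarrow> ('s,'a) rvec measure) \<Rightarrow> ('s::finite,'a::finite) lpolicy \<Rightarrow> real" where
  "policy_value H \<mu> P D \<pi> = (\<Sum>s\<in>UNIV. pmf \<mu> s * qval H P D \<pi> H s)"

definition Pi1 :: "nat \<Rightarrow> ('s::finite,'a::finite) lpolicy set" where
  "Pi1 H = {\<pi>. \<forall>h\<in>{1..H}. \<forall>s a. (\<lambda>R. pmf (\<pi> h s R) a) \<in> borel_measurable borel}"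

definition Pi0 :: "nat \<Rightarrow> ('s::finite,'a::finite) lpolicy set" where
  "Pi0 H = {\<pi> \<in> Pi1 H. \<forall>h s R R'. \<pi> h s R = \<pi> h s R'}"

definition opt_value :: "nat \<Rightarrow> 's pmf \<Rightarrow> (nat \<Rightarrow> 's \<Rightarrow> 'a \<Rightarrow> 's pmf)
     \<Rightarrow> (nat \<Rightarrow> ('s,'a) rvec measure) \<Rightarrow> ('s::finite,'a::finite) lpolicy set \<Rightarrow> real" where
  "opt_value H \<mu> P D PS = (SUP \<pi>\<in>PS. policy_value H \<mu> P D \<pi>)"

definition reward_dists :: "nat \<Rightarrow> (nat \<Rightarrow> 's \<Rightarrow> 'a \<Rightarrow> real)
     \<Rightarrow> (nat \<Rightarrow> ('s,'a) rvec measure) set" where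
  "reward_dists H r = {D. \<forall>h\<in>{1..H}.
      prob_space (D h) \<and> sets (D h) = sets borel \<and>
      (AE R in D h. \<forall>s a. 0 \<le> R s a) \<and>
      (\<forall>s a. integrable (D h) (\<lambda>R. R s a) \<and> (\<integral>R. R s a \<partial>(D h)) = r h s a)}"

definition CR1 :: "nat \<Rightarrow> 's::finite pmf \<Rightarrow> (nat \<Rightarrow> 's \<Rightarrow> 'a::finite \<Rightarrow> 's pmf)
     \<Rightarrow> (nat \<Rightarrow> 's \<Rightarrow> 'a \<Rightarrow> real) \<Rightarrow> ereal" where
  "CR1 H \<mu> P r = (INF D\<in>reward_dists H r.
      (let v0 = opt_value H \<mu> P D (Pi0 H :: ('s,'a) lpolicy set);
           v1 = opt_value H \<mu> P D (Pi1 H :: ('s,'a) lpolicy set)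
       in if v1 = 0 then \<infinity> else ereal (v0 / v1)))"

end

theory Submission
  imports Defs
begin

text \<open>Without lookahead, the optimal value is given by the Bellman recursion
\<open>V(s) = max\<^sub>a (r(s,a) + E V(s'))\<close> and is attained by the greedy deterministic policy.
An agent that sees the current rewards before acting collects, at each step, at most the sum of
the realised rewards over all actions plus the best expected continuation; taking expectations,
its value is bounded by the recursion \<open>U(s) = \<Sum>\<^sub>a r(s,a) + max\<^sub>a E U(s')\<close>. The ratio condition
gives \<open>\<Sum>\<^sub>a r(s,a) \<le> A C min\<^sub>a r(s,a)\<close>, and \<open>V(s) \<ge> min\<^sub>a r(s,a) + max\<^sub>a E V(s')\<close>, so
\<open>U \<le> A C V\<close> by induction on the remaining horizon.\<close>

lemma Max_range_ge:
  fixes g :: "'a::finite \<Rightarrow> 'b::linorder"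
  shows "g a \<le> Max (range g)"
  by simp

lemma Max_range_mono:
  fixes g g' :: "'a::finite \<Rightarrow> 'b::linorder"
  assumes "\<And>a. g a \<le> g' a"
  shows "Max (range g) \<le> Max (range g')"
  using assms by (auto intro: order_trans[OF _ Max_range_ge])

lemma Max_range_attained:
  fixes f :: "'a::finite \<Rightarrow> 'b::linorder"
  obtains a where "f a = Max (range f)"
proof -
  have "Max (range f) \<in> range f"
    by (intro Max_in) auto
  then show ?thesis
    using that by (metis imageE)
qed

lemma arg_max_range:
  fixes f :: "'a::finite \<Rightarrow> 'b::linorder"
  shows "f (ARG_MAX f a. True) = Max (range f)"
proof -
  obtain k where "f k = Max (range f)"
    by (rule Max_range_attained)
  then show ?thesis
    using arg_max_equality[of "\<lambda>_. True" k f] by (simp add: Max_range_ge)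
qed

lemma sum_pmf_mult_add_le_sum_add_Max:
  fixes p :: "'a::finite pmf" and x c :: "'a \<Rightarrow> real"
  assumes "\<And>a. 0 \<le> x a"
  shows "(\<Sum>a\<in>UNIV. pmf p a * (x a + c a)) \<le> (\<Sum>a\<in>UNIV. x a) + Max (range c)"
proof -
  have "(\<Sum>a\<in>UNIV. pmf p a * x a) \<le> (\<Sum>a\<in>UNIV. x a)"
    using assms by (intro sum_mono) (simp add: mult_left_le_one_le pmf_le_1)
  moreover have "(\<Sum>a\<in>UNIV. pmf p a * c a) \<le> (\<Sum>a\<in>UNIV. pmf p a * Max (range c))"
    by (intro sum_mono mult_left_mono Max_range_ge) simp
  moreover have "(\<Sum>a\<in>UNIV. pmf p a) = 1"
    by (simp add: sum_pmf_eq_1)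
  ultimately show ?thesis
    by (simp add: distrib_left sum.distrib flip: sum_distrib_right)
qed

text \<open>The key estimate for lookahead agents: however the action depends on the observed rewards
\<open>X\<close>, it cannot earn more than all of them together.\<close>

lemma integral_adaptive_choice_le:
  fixes X :: "'w \<Rightarrow> 'a::finite \<Rightarrow> real" and q :: "'w \<Rightarrow> 'a pmf" and c :: "'a \<Rightarrow> real"
  assumes "prob_space M"
    and X_int: "\<And>a. integrable M (\<lambda>\<omega>. X \<omega> a)"
    and X_nonneg: "AE \<omega> in M. \<forall>a. 0 \<le> X \<omega> a"
    and q_meas: "\<And>a. (\<lambda>\<omega>. pmf (q \<omega>) a) \<in> borel_measurable M"
  shows "(\<integral>\<omega>. (\<Sum>a\<in>UNIV. pmf (q \<omega>) a * (X \<omega> a + c a)) \<partial>M)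
           \<le> (\<Sum>a\<in>UNIV. \<integral>\<omega>. X \<omega> a \<partial>M) + Max (range c)"
proof -
  interpret prob_space M by fact
  let ?f = "\<lambda>\<omega>. \<Sum>a\<in>UNIV. pmf (q \<omega>) a * (X \<omega> a + c a)"
  let ?g = "\<lambda>\<omega>. (\<Sum>a\<in>UNIV. X \<omega> a) + Max (range c)"
  have g_int: "integrable M ?g"
    using X_int by simp
  have f_meas: "?f \<in> borel_measurable M"
    using X_int q_meas by measurable
  let ?b = "\<lambda>\<omega>. \<Sum>a\<in>UNIV. \<bar>X \<omega> a\<bar> + \<bar>c a\<bar>"
  have b_int: "integrable M ?b"
    using X_int by (intro Bochner_Integration.integrable_sum Bochner_Integration.integrable_add) auto
  have "\<bar>?f \<omega>\<bar> \<le> ?b \<omega>" for \<omega>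
  proof -
    have "\<bar>?f \<omega>\<bar> \<le> (\<Sum>a\<in>UNIV. \<bar>pmf (q \<omega>) a * (X \<omega> a + c a)\<bar>)"
      by (rule sum_abs)
    also have "\<dots> = (\<Sum>a\<in>UNIV. pmf (q \<omega>) a * \<bar>X \<omega> a + c a\<bar>)"
      by (simp add: abs_mult)
    also have "\<dots> \<le> (\<Sum>a\<in>UNIV. \<bar>X \<omega> a\<bar> + \<bar>c a\<bar>)"
      by (intro sum_mono order_trans[OF mult_left_le_one_le abs_triangle_ineq]) (auto simp: pmf_le_1)
    finally show ?thesis .
  qed
  then have f_int: "integrable M ?f"
    by (intro Bochner_Integration.integrable_bound[OF b_int f_meas] AE_I2)
       (auto intro: order_trans[OF _ abs_ge_self])
  have "integral\<^sup>L M ?f \<le> integral\<^sup>L M ?g"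
    using X_nonneg
    by (intro integral_mono_AE[OF f_int g_int]) (auto intro: sum_pmf_mult_add_le_sum_add_Max)
  also have "\<dots> = (\<Sum>a\<in>UNIV. \<integral>\<omega>. X \<omega> a \<partial>M) + Max (range c)"
    using X_int by (simp add: Bochner_Integration.integral_sum prob_space)
  finally show ?thesis .
qed

lemma sum_le_card_mult_Min:
  fixes g :: "'a::finite \<Rightarrow> real"
  assumes nonneg: "\<And>a. 0 \<le> g a"
    and ratio: "(\<exists>a. 0 < g a) \<longrightarrow> 0 < Min (range g) \<and> Max (range g) / Min (range g) \<le> C"
  shows "(\<Sum>a\<in>UNIV. g a) \<le> real CARD('a) * C * Min (range g)"
proof (cases "\<exists>a. 0 < g a")
  case True
  with ratio have "0 < Min (range g)" and "Max (range g) / Min (range g) \<le> C"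
    by blast+
  then have "Max (range g) \<le> C * Min (range g)"
    by (metis pos_divide_le_eq mult.commute)
  then have "g a \<le> C * Min (range g)" for a
    using Max_range_ge[of g a] by linarith
  then have "(\<Sum>a\<in>UNIV. g a) \<le> (\<Sum>a\<in>(UNIV::'a set). C * Min (range g))"
    by (intro sum_mono)
  then show ?thesis
    by simp
next
  case False
  then have "g = (\<lambda>_. 0)"
    using nonneg by (meson antisym not_le)
  then show ?thesis
    by simp
qed

abbreviation next_mean :: "(nat \<Rightarrow> 's::finite \<Rightarrow> 'a \<Rightarrow> 's pmf) \<Rightarrow> nat \<Rightarrow> 's \<Rightarrow> 'a \<Rightarrow> ('s \<Rightarrow> real) \<Rightarrow> real"
  where "next_mean P h s a v \<equiv> \<Sum>s'\<in>UNIV. pmf (P h s a) s' * v s'"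

text \<open>As in \<^const>\<open>qval\<close>, the argument \<open>n\<close> counts the remaining steps, the current one being
\<open>H - n + 1\<close>; so at step \<open>h\<close> the continuation is evaluated with \<open>H - h\<close> remaining steps.\<close>

fun bellman_value :: "nat \<Rightarrow> (nat \<Rightarrow> 's::finite \<Rightarrow> 'a::finite \<Rightarrow> 's pmf)
    \<Rightarrow> (nat \<Rightarrow> 's \<Rightarrow> 'a \<Rightarrow> real) \<Rightarrow> nat \<Rightarrow> 's \<Rightarrow> real" where
  "bellman_value H P r 0 s = 0"
| "bellman_value H P r (Suc n) s =
     Max (range (\<lambda>a. r (H - n) s a + next_mean P (H - n) s a (bellman_value H P r n)))"

fun lookahead_bound :: "nat \<Rightarrow> (nat \<Rightarrow> 's::finite \<Rightarrow> 'a::finite \<Rightarrow> 's pmf)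
    \<Rightarrow> (nat \<Rightarrow> 's \<Rightarrow> 'a \<Rightarrow> real) \<Rightarrow> nat \<Rightarrow> 's \<Rightarrow> real" where
  "lookahead_bound H P r 0 s = 0"
| "lookahead_bound H P r (Suc n) s =
     (\<Sum>a\<in>UNIV. r (H - n) s a) + Max (range (\<lambda>a. next_mean P (H - n) s a (lookahead_bound H P r n)))"

definition greedy_policy :: "nat \<Rightarrow> (nat \<Rightarrow> 's \<Rightarrow> 'a \<Rightarrow> 's pmf) \<Rightarrow> (nat \<Rightarrow> 's \<Rightarrow> 'a \<Rightarrow> real)
    \<Rightarrow> ('s::finite, 'a::finite) lpolicy" where
  "greedy_policy H P r h s R =
     return_pmf (ARG_MAX (\<lambda>a. r h s a + next_mean P h s a (bellman_value H P r (H - h))) a. True)"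

lemma greedy_policy_in_Pi0: "greedy_policy H P r \<in> Pi0 H"
  by (simp add: Pi0_def Pi1_def greedy_policy_def)

lemma Pi0_subset_Pi1: "Pi0 H \<subseteq> Pi1 H"
  by (auto simp: Pi0_def)

lemma reward_distsD:
  assumes "D \<in> reward_dists H r" and "h \<in> {1..H}"
  shows "prob_space (D h)" and "sets (D h) = sets borel" and "AE R in D h. \<forall>s a. 0 \<le> R s a"
    and "integrable (D h) (\<lambda>R. R s a)" and "(\<integral>R. R s a \<partial>D h) = r h s a"
  using assms unfolding reward_dists_def by auto

lemma bellman_value_nonneg:
  assumes "\<forall>h\<in>{1..H}. \<forall>s a. 0 \<le> r h s a" and "n \<le> H"
  shows "0 \<le> bellman_value H P r n s"
  using \<open>n \<le> H\<close>
proof (induction n arbitrary: s)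
  case (Suc n)
  have "0 \<le> r (H - n) s a + next_mean P (H - n) s a (bellman_value H P r n)" for a
    using Suc assms(1) by (intro add_nonneg_nonneg sum_nonneg mult_nonneg_nonneg) auto
  then show ?case
    by (simp add: order_trans[OF _ Max_range_ge])
qed simp

lemma qval_greedy_policy:
  assumes D: "D \<in> reward_dists H r" and "n \<le> H"
  shows "qval H P D (greedy_policy H P r) n s = bellman_value H P r n s"
  using \<open>n \<le> H\<close>
proof (induction n arbitrary: s)
  case (Suc n)
  define h where "h = H - n"
  have h: "h \<in> {1..H}" "H - h = n"
    using Suc.prems by (auto simp: h_def)
  interpret prob_space "D h"
    using reward_distsD(1)[OF D h(1)] .
  let ?g = "\<lambda>a. r h s a + next_mean P h s a (bellman_value H P r n)"
  define a0 where "a0 = (ARG_MAX ?g a. True)"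
  have IH: "qval H P D (greedy_policy H P r) n = bellman_value H P r n"
    using Suc by auto
  have "qval H P D (greedy_policy H P r) (Suc n) s
      = (\<integral>R. R s a0 + next_mean P h s a0 (bellman_value H P r n) \<partial>D h)"
    unfolding qval.simps Let_def IH by (simp add: greedy_policy_def a0_def h flip: h_def)
  also have "\<dots> = ?g a0"
    using reward_distsD(4,5)[OF D h(1)] by (simp add: prob_space)
  also have "\<dots> = bellman_value H P r (Suc n) s"
    using arg_max_range[of ?g] by (simp add: a0_def flip: h_def)
  finally show ?case .
qed simp

lemma qval_le_lookahead_bound:
  assumes D: "D \<in> reward_dists H r" and \<pi>: "\<pi> \<in> Pi1 H" and "n \<le> H"
  shows "qval H P D \<pi> n s \<le> lookahead_bound H P r n s"
  using \<open>n \<le> H\<close>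
proof (induction n arbitrary: s)
  case (Suc n)
  define h where "h = H - n"
  have h: "h \<in> {1..H}"
    using Suc.prems by (auto simp: h_def)
  have \<pi>_meas: "(\<lambda>R. pmf (\<pi> h s R) a) \<in> borel_measurable (D h)" for a
    using \<pi> h reward_distsD(2)[OF D h] by (simp add: Pi1_def cong: measurable_cong_sets)
  have R_nonneg: "AE R in D h. \<forall>a. 0 \<le> R s a"
    using reward_distsD(3)[OF D h] by (rule eventually_mono) simp
  have "qval H P D \<pi> (Suc n) s
      = (\<integral>R. (\<Sum>a\<in>UNIV. pmf (\<pi> h s R) a * (R s a + next_mean P h s a (qval H P D \<pi> n))) \<partial>D h)"
    by (simp add: Let_def flip: h_def)
  also have "\<dots> \<le> (\<Sum>a\<in>UNIV. r h s a) + Max (range (\<lambda>a. next_mean P h s a (qval H P D \<pi> n)))"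
    using integral_adaptive_choice_le[OF reward_distsD(1,4)[OF D h] R_nonneg \<pi>_meas]
    by (simp add: reward_distsD(5)[OF D h])
  also have "\<dots> \<le> (\<Sum>a\<in>UNIV. r h s a) + Max (range (\<lambda>a. next_mean P h s a (lookahead_bound H P r n)))"
  proof -
    have "next_mean P h s a (qval H P D \<pi> n) \<le> next_mean P h s a (lookahead_bound H P r n)" for a
      using Suc by (intro sum_mono mult_left_mono) auto
    then show ?thesis
      by (intro add_left_mono Max_range_mono)
  qed
  also have "\<dots> = lookahead_bound H P r (Suc n) s"
    by (simp flip: h_def)
  finally show ?case .
qed simp

lemma lookahead_bound_le_bellman_value:
  fixes P :: "nat \<Rightarrow> 's::finite \<Rightarrow> 'a::finite \<Rightarrow> 's pmf" and r :: "nat \<Rightarrow> 's \<Rightarrow> 'a \<Rightarrow> real"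
  assumes nonneg: "\<forall>h\<in>{1..H}. \<forall>s a. 0 \<le> r h s a" and "0 \<le> C"
    and ratio: "\<forall>h\<in>{1..H}. \<forall>s. (\<exists>a. 0 < r h s a) \<longrightarrow>
           (0 < Min (range (r h s)) \<and> Max (range (r h s)) / Min (range (r h s)) \<le> C)"
    and "n \<le> H"
  shows "lookahead_bound H P r n s \<le> real CARD('a) * C * bellman_value H P r n s"
  using \<open>n \<le> H\<close>
proof (induction n arbitrary: s)
  case (Suc n)
  define h where "h = H - n"
  define K where "K = real CARD('a) * C"
  have h: "h \<in> {1..H}"
    using Suc.prems by (auto simp: h_def)
  have "0 \<le> K"
    using \<open>0 \<le> C\<close> by (simp add: K_def)
  let ?cU = "\<lambda>a. next_mean P h s a (lookahead_bound H P r n)"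
  let ?cV = "\<lambda>a. next_mean P h s a (bellman_value H P r n)"
  obtain a1 where a1: "?cV a1 = Max (range ?cV)"
    by (rule Max_range_attained)
  have "?cU a \<le> K * Max (range ?cV)" for a
  proof -
    have "?cU a \<le> next_mean P h s a (\<lambda>s'. K * bellman_value H P r n s')"
      using Suc by (intro sum_mono mult_left_mono) (auto simp: K_def)
    also have "\<dots> = K * ?cV a"
      by (simp add: sum_distrib_left algebra_simps)
    also have "\<dots> \<le> K * Max (range ?cV)"
      using \<open>0 \<le> K\<close> by (intro mult_left_mono Max_range_ge)
    finally show ?thesis .
  qed
  then have cont_le: "Max (range ?cU) \<le> K * ?cV a1"
    by (simp add: a1)
  have reward_le: "(\<Sum>a\<in>UNIV. r h s a) \<le> K * r h s a1"
  proof -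
    have "(\<Sum>a\<in>UNIV. r h s a) \<le> K * Min (range (r h s))"
      unfolding K_def using nonneg ratio h by (intro sum_le_card_mult_Min) blast+
    also have "\<dots> \<le> K * r h s a1"
      using \<open>0 \<le> K\<close> by (intro mult_left_mono Min_le) auto
    finally show ?thesis .
  qed
  have "lookahead_bound H P r (Suc n) s = (\<Sum>a\<in>UNIV. r h s a) + Max (range ?cU)"
    by (simp flip: h_def)
  also have "\<dots> \<le> K * (r h s a1 + ?cV a1)"
    unfolding distrib_left using reward_le cont_le by (rule add_mono)
  also have "\<dots> \<le> K * bellman_value H P r (Suc n) s"
    using \<open>0 \<le> K\<close> Max_range_ge[of "\<lambda>a. r h s a + ?cV a" a1]
    by (simp add: mult_left_mono flip: h_def)
  finally show ?case
    by (simp add: K_def)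
qed simp

lemma policy_value_greedy_policy:
  assumes "D \<in> reward_dists H r"
  shows "policy_value H \<mu> P D (greedy_policy H P r) = (\<Sum>s\<in>UNIV. pmf \<mu> s * bellman_value H P r H s)"
  using qval_greedy_policy[OF assms] by (simp add: policy_value_def)

lemma policy_value_le_lookahead_bound:
  assumes "D \<in> reward_dists H r" and "\<pi> \<in> Pi1 H"
  shows "policy_value H \<mu> P D \<pi> \<le> (\<Sum>s\<in>UNIV. pmf \<mu> s * lookahead_bound H P r H s)"
  unfolding policy_value_def
  using qval_le_lookahead_bound[OF assms] by (intro sum_mono mult_left_mono) auto

lemma opt_value_Pi1_le_lookahead_bound:
  assumes "D \<in> reward_dists H r"
  shows "opt_value H \<mu> P D (Pi1 H) \<le> (\<Sum>s\<in>UNIV. pmf \<mu> s * lookahead_bound H P r H s)"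
proof -
  have "greedy_policy H P r \<in> Pi1 H"
    using greedy_policy_in_Pi0 Pi0_subset_Pi1 by blast
  then show ?thesis
    unfolding opt_value_def using policy_value_le_lookahead_bound[OF assms]
    by (intro cSUP_least) auto
qed

lemma policy_value_le_opt_value:
  assumes "D \<in> reward_dists H r" and "PS \<subseteq> Pi1 H" and "\<pi> \<in> PS"
  shows "policy_value H \<mu> P D \<pi> \<le> opt_value H \<mu> P D PS"
  unfolding opt_value_def
proof (rule cSUP_upper)
  have "policy_value H \<mu> P D \<pi>' \<le> (\<Sum>s\<in>UNIV. pmf \<mu> s * lookahead_bound H P r H s)"
    if "\<pi>' \<in> PS" for \<pi>'
    using policy_value_le_lookahead_bound[OF assms(1)] assms(2) that by blast
  then show "bdd_above (policy_value H \<mu> P D ` PS)"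
    by (rule bdd_aboveI2)
qed fact

lemma CR1_ge_inverse:
  assumes "0 < K"
    and "\<And>D. D \<in> reward_dists H r \<Longrightarrow> 0 \<le> opt_value H \<mu> P D (Pi1 H)"
    and "\<And>D. D \<in> reward_dists H r \<Longrightarrow> opt_value H \<mu> P D (Pi1 H) \<le> K * opt_value H \<mu> P D (Pi0 H)"
  shows "ereal (1 / K) \<le> CR1 H \<mu> P r"
  unfolding CR1_def Let_def
proof (rule INF_greatest)
  fix D assume "D \<in> reward_dists H r"
  then have "0 \<le> opt_value H \<mu> P D (Pi1 H)" "opt_value H \<mu> P D (Pi1 H) \<le> K * opt_value H \<mu> P D (Pi0 H)"
    using assms(2,3) by blast+
  then show "ereal (1 / K) \<le> (if opt_value H \<mu> P D (Pi1 H) = 0 then \<infinity>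
      else ereal (opt_value H \<mu> P D (Pi0 H) / opt_value H \<mu> P D (Pi1 H)))"
    using \<open>0 < K\<close> by (auto simp: field_simps mult.commute)
qed

theorem mainTheorem9:
  fixes H :: nat and \<mu> :: "'s::finite pmf" and P :: "nat \<Rightarrow> 's \<Rightarrow> 'a::finite \<Rightarrow> 's pmf"
    and r :: "nat \<Rightarrow> 's \<Rightarrow> 'a \<Rightarrow> real" and C :: real
  assumes "\<forall>h\<in>{1..H}. \<forall>s a. 0 \<le> r h s a"
    and "1 \<le> C"
    and "\<forall>h\<in>{1..H}. \<forall>s. (\<exists>a. 0 < r h s a) \<longrightarrow>
           (0 < Min (range (r h s)) \<and> Max (range (r h s)) / Min (range (r h s)) \<le> C)"
  shows "CR1 H \<mu> P r \<ge> ereal (1 / (real CARD('a) * C))"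
proof (rule CR1_ge_inverse)
  let ?K = "real CARD('a) * C"
  show "0 < ?K"
    using \<open>1 \<le> C\<close> by simp
  fix D assume D: "D \<in> reward_dists H r"
  let ?greedy = "policy_value H \<mu> P D (greedy_policy H P r)"
  have greedy_le_opt: "?greedy \<le> opt_value H \<mu> P D PS" if "PS \<subseteq> Pi1 H" "greedy_policy H P r \<in> PS" for PS
    using policy_value_le_opt_value[OF D that] .
  have "0 \<le> ?greedy"
    using bellman_value_nonneg[OF assms(1)] by (simp add: policy_value_greedy_policy[OF D] sum_nonneg)
  then show "0 \<le> opt_value H \<mu> P D (Pi1 H)"
    using greedy_le_opt[OF order_refl] greedy_policy_in_Pi0 Pi0_subset_Pi1 by fastforce
  have "opt_value H \<mu> P D (Pi1 H) \<le> (\<Sum>s\<in>UNIV. pmf \<mu> s * lookahead_bound H P r H s)"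
    by (rule opt_value_Pi1_le_lookahead_bound[OF D])
  also have "\<dots> \<le> (\<Sum>s\<in>UNIV. pmf \<mu> s * (?K * bellman_value H P r H s))"
    using lookahead_bound_le_bellman_value[OF assms(1) _ assms(3)] \<open>1 \<le> C\<close>
    by (intro sum_mono mult_left_mono) simp_all
  also have "\<dots> = ?K * ?greedy"
    by (simp add: policy_value_greedy_policy[OF D] sum_distrib_left algebra_simps)
  also have "\<dots> \<le> ?K * opt_value H \<mu> P D (Pi0 H)"
    using greedy_le_opt[OF Pi0_subset_Pi1 greedy_policy_in_Pi0] less_imp_le[OF \<open>0 < ?K\<close>]
    by (rule mult_left_mono)
  finally show "opt_value H \<mu> P D (Pi1 H) \<le> ?K * opt_value H \<mu> P D (Pi0 H)" .
qed

end
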